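(* Let $q$ be a prime power, $e\ge2$, $r_1,\dots,r_{e-1},m>1$ integers, $n=r_{e-1}\cdots r_1m$, and $k$ an integer with $1<k\le m$. Put $N_1=m$ and $N_i=r_{i-1}\cdots r_1m$ for $2\le i\le e$ (so $N_e=n$). Let $\mathcal{C}_1\subseteq\mathcal{G}_q(m,k)$ be a union of finitely many pairwise distinct orbits under $\mathbb{F}_{q^m}^*$. For each $i=2,\dots,e$ let $\Phi_{i,1},\dots,\Phi_{i,s_i}:\mathbb{F}_{q^{N_{i-1}}}\to\mathbb{F}_{q^{N_i}}$ be injective $\mathbb{F}_q$-linear maps such that the subspaces $V_{i,h}=\Phi_{i,h}(\mathbb{F}_{q^{N_{i-1}}})$ have pairwise distinct orbits under $\mathbb{F}_{q^{N_i}}^*$, and let $\mathcal{C}_i=\bigcup_{h=1}^{s_i}\mathrm{Orb}_{\mathbb{F}_{q^{N_i}}^*}(V_{i,h})\subseteq\mathcal{G}_q(N_i,N_{i-1})$ be full-length. Define recursively $\mathcal{D}_1=\mathcal{C}_1$ and, for $2\le i\le e$, $$\mathcal{D}_i=\mathcal{C}_i\odot\mathcal{D}_{i-1}=\{\beta\,\Phi_{i,h}(U):\ \beta\in\mathbb{F}_{q^{N_i}}^*,\ 1\le h\le s_i,\ U\in\mathcal{D}_{i-1}\}\subseteq\mathcal{G}_q(N_i,k).$$ Assume $d(\mathcal{C}_1)=2k-2$ and $d(\mathcal{C}_i)=2N_{i-1}-2$ for every $i=2,\dots,e$. Then $\mathcal{C}:=\mathcal{D}_e=\mathcal{C}_e\odot\cdots\odot\mathcal{C}_1\subseteq\mathcal{G}_q(n,k)$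 is a multi-orbit cyclic subspace code with minimum distance $2k-2$ and $|\mathcal{C}|=\prod_{i=1}^e|\mathcal{C}_i|$.
   Context: For positive integers $k\le N$, $\mathcal{G}_q(N,k)$ is the set of $k$-dimensional $\mathbb{F}_q$-subspaces of $\mathbb{F}_{q^N}$. Subspace distance $d(U,V)=\dim_{\mathbb{F}_q}(U+V)-\dim_{\mathbb{F}_q}(U\cap V)$; $d(\mathcal{C})=\min\{d(U,V):U,V\in\mathcal{C},U\ne V\}$. For $V\in\mathcal{G}_q(N,k)$, $\mathrm{Orb}_{\mathbb{F}_{q^N}^*}(V)=\{\beta V:\beta\in\mathbb{F}_{q^N}^*\}$; a multi-orbit cyclic subspace code is a union of such orbits. A one-orbit code $\mathrm{Orb}_{\mathbb{F}_{q^N}^*}(V)$ is full-length if $\{\beta\in\mathbb{F}_{q^N}^*:\beta V=V\}=\mathbb{F}_q^*$; a union of orbits is full-length if each orbit is. *)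

theory Defs
  imports "HOL-Computational_Algebra.Primes" "HOL-Library.Extended_Nat"
begin

text \<open>Ambient finite field 'a (of order q^n).  The field F_{q^N} (N dividing n) is
  realised as its unique subfield of order q^N, and F_q = subfield q 1.\<close>

definition subfield :: "nat \<Rightarrow> nat \<Rightarrow> ('a::{field,finite}) set" where
  "subfield q N = {x. x ^ (q ^ N) = x}"

definition fq_span :: "'a::field set \<Rightarrow> 'a set \<Rightarrow> 'a set" where
  "fq_span F S = {x. \<exists>c T. finite T \<and> T \<subseteq> S \<and> (\<forall>t\<in>T. c t \<in> F) \<and> x = (\<Sum>t\<in>T. c t * t)}"

definition fq_subspace :: "'a::field set \<Rightarrow> 'a set \<Rightarrow> bool" where
  "fq_subspace F U \<longleftrightarrow> 0 \<in> U \<and> (\<forall>x\<in>U. \<forall>y\<in>U. x + y \<in> U) \<and> (\<forall>c\<in>F. \<forall>x\<in>U. c * x \<in> U)"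

definition fq_dim :: "'a::field set \<Rightarrow> 'a set \<Rightarrow> nat" where
  "fq_dim F U = (LEAST d. \<exists>S. finite S \<and> S \<subseteq> U \<and> card S = d \<and> fq_span F S = U)"

definition Grass :: "nat \<Rightarrow> nat \<Rightarrow> nat \<Rightarrow> ('a::{field,finite}) set set" where
  "Grass q N k = {U. U \<subseteq> subfield q N \<and> fq_subspace (subfield q 1) U
                    \<and> fq_dim (subfield q 1) U = k}"

definition sdist :: "nat \<Rightarrow> ('a::{field,finite}) set \<Rightarrow> 'a set \<Rightarrow> nat" where
  "sdist q U V = fq_dim (subfield q 1) {u + v | u v. u \<in> U \<and> v \<in> V}
                 - fq_dim (subfield q 1) (U \<inter> V)"

text \<open>Minimum distance (\<infinity> if the code has fewer than two codewords).\<close>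
definition min_dist :: "nat \<Rightarrow> ('a::{field,finite}) set set \<Rightarrow> enat" where
  "min_dist q C = Inf {enat (sdist q U V) | U V. U \<in> C \<and> V \<in> C \<and> U \<noteq> V}"

definition orb :: "nat \<Rightarrow> nat \<Rightarrow> ('a::{field,finite}) set \<Rightarrow> 'a set set" where
  "orb q N V = {(\<lambda>x. \<beta> * x) ` V | \<beta>. \<beta> \<in> subfield q N \<and> \<beta> \<noteq> 0}"

definition full_length :: "nat \<Rightarrow> nat \<Rightarrow> ('a::{field,finite}) set \<Rightarrow> bool" where
  "full_length q N V \<longleftrightarrow>
     {\<beta> \<in> subfield q N. \<beta> \<noteq> 0 \<and> (\<lambda>x. \<beta> * x) ` V = V} = subfield q 1 - {0}"

definition cyclic_code :: "nat \<Rightarrow> nat \<Rightarrow> nat \<Rightarrow> ('a::{field,finite}) set set \<Rightarrow> bool" where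
  "cyclic_code q N k C \<longleftrightarrow> C \<subseteq> Grass q N k \<and>
     (\<exists>Vs. finite Vs \<and> Vs \<subseteq> Grass q N k \<and> C = \<Union> (orb q N ` Vs))"

definition fq_linear_on :: "nat \<Rightarrow> ('a::{field,finite}) set \<Rightarrow> ('a \<Rightarrow> 'a) \<Rightarrow> bool" where
  "fq_linear_on q A f \<longleftrightarrow> (\<forall>x\<in>A. \<forall>y\<in>A. f (x + y) = f x + f y) \<and>
     (\<forall>c\<in>subfield q 1. \<forall>x\<in>A. f (c * x) = c * f x)"

end

theory Submission
  imports Defs "HOL-Number_Theory.Residues" "HOL-Computational_Algebra.Polynomial"
begin

(* Over F_q, k-dimensional subspaces X and Y are at distance 2k - 2 dim (X Int Y), so the
   hypothesis d(C_i) = 2 N_(i-1) - 2 says that distinct codewords of C_i meet in at most a line.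
   A codeword beta Phi_h(U) of C_i (.) D_(i-1) lies in the codeword beta V_h of C_i, and in no
   other one, as two codewords of C_i share no subspace of dimension k > 1.  Two codewords of
   the product inside different codewords of C_i thus meet in at most a line.  Two inside the
   same beta V_h are images of codewords of D_(i-1) under the single injective F_q-linear map
   x |-> beta Phi_h(x), because distinct orbits and full length determine h, and beta up to a
   factor in F_q; such a map preserves distances.  So the minimum distance 2k - 2 is inherited,
   and counting inside each codeword of C_i gives |C_i (.) D_(i-1)| = |C_i| |D_(i-1)|. *)

section \<open>Subspaces over a subfield\<close>

definition is_subfield :: "'a::field set \<Rightarrow> bool" where
  "is_subfield F \<longleftrightarrow> 0 \<in> F \<and> 1 \<in> F \<and> (\<forall>x\<in>F. \<forall>y\<in>F. x + y \<in> F \<and> x * y \<in> F)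
     \<and> (\<forall>x\<in>F. - x \<in> F \<and> inverse x \<in> F)"

lemma
  assumes "is_subfield F"
  shows is_subfield_0: "0 \<in> F"
    and is_subfield_1: "1 \<in> F"
    and is_subfield_mult: "x \<in> F \<Longrightarrow> y \<in> F \<Longrightarrow> x * y \<in> F"
    and is_subfield_diff: "x \<in> F \<Longrightarrow> y \<in> F \<Longrightarrow> x - y \<in> F"
    and is_subfield_divide: "x \<in> F \<Longrightarrow> y \<in> F \<Longrightarrow> x / y \<in> F"
proof -
  show "0 \<in> F" "1 \<in> F" "x \<in> F \<Longrightarrow> y \<in> F \<Longrightarrow> x * y \<in> F"
    using assms unfolding is_subfield_def by blast+
  show "x \<in> F \<Longrightarrow> y \<in> F \<Longrightarrow> x - y \<in> F"
    using assms unfolding is_subfield_def diff_conv_add_uminus by blast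
  show "x \<in> F \<Longrightarrow> y \<in> F \<Longrightarrow> x / y \<in> F"
    using assms unfolding is_subfield_def divide_inverse by blast
qed

lemma card_is_subfield_ge_2:
  fixes F :: "'a::{field,finite} set"
  assumes "is_subfield F"
  shows "2 \<le> card F"
proof -
  have "{0, 1} \<subseteq> F" using is_subfield_0[OF assms] is_subfield_1[OF assms] by blast
  then show ?thesis using card_mono[of F "{0, 1}"] by simp
qed

lemma
  assumes "fq_subspace F U"
  shows fq_subspace_0: "0 \<in> U"
    and fq_subspace_add: "x \<in> U \<Longrightarrow> y \<in> U \<Longrightarrow> x + y \<in> U"
    and fq_subspace_scale: "c \<in> F \<Longrightarrow> x \<in> U \<Longrightarrow> c * x \<in> U"
  using assms unfolding fq_subspace_def by blast+

lemma fq_subspace_diff: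
  assumes F: "is_subfield F" and U: "fq_subspace F U" and "x \<in> U" "y \<in> U"
  shows "x - y \<in> U"
proof -
  have "0 - 1 \<in> F" using F by (intro is_subfield_diff is_subfield_0 is_subfield_1)
  then have "x + (0 - 1) * y \<in> U"
    using assms(3,4) by (intro fq_subspace_add[OF U] fq_subspace_scale[OF U])
  then show ?thesis by simp
qed

lemma fq_subspace_Int: "fq_subspace F X \<Longrightarrow> fq_subspace F Y \<Longrightarrow> fq_subspace F (X \<inter> Y)"
  unfolding fq_subspace_def by blast

lemma fq_subspace_set_plus:
  assumes X: "fq_subspace F X" and Y: "fq_subspace F Y"
  shows "fq_subspace F {u + v | u v. u \<in> X \<and> v \<in> Y}"
  unfolding fq_subspace_def
proof (intro conjI ballI)
  have "0 + 0 \<in> {u + v | u v. u \<in> X \<and> v \<in> Y}"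
    using fq_subspace_0[OF X] fq_subspace_0[OF Y] by blast
  then show "0 \<in> {u + v | u v. u \<in> X \<and> v \<in> Y}" by simp
next
  fix x y assume "x \<in> {u + v | u v. u \<in> X \<and> v \<in> Y}" "y \<in> {u + v | u v. u \<in> X \<and> v \<in> Y}"
  then obtain u v u' v' where uv: "x = u + v" "y = u' + v'" "u \<in> X" "v \<in> Y" "u' \<in> X" "v' \<in> Y"
    by blast
  have "x + y = (u + u') + (v + v')" using uv(1,2) by (simp add: algebra_simps)
  moreover have "u + u' \<in> X" "v + v' \<in> Y"
    using uv(3-6) fq_subspace_add[OF X] fq_subspace_add[OF Y] by auto
  ultimately show "x + y \<in> {u + v | u v. u \<in> X \<and> v \<in> Y}" by blast
next
  fix c x assume c: "c \<in> F" and "x \<in> {u + v | u v. u \<in> X \<and> v \<in> Y}"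
  then obtain u v where uv: "x = u + v" "u \<in> X" "v \<in> Y" by blast
  have "c * x = c * u + c * v" using uv(1) by (simp add: algebra_simps)
  moreover have "c * u \<in> X" "c * v \<in> Y"
    using uv(2,3) fq_subspace_scale[OF X c] fq_subspace_scale[OF Y c] by auto
  ultimately show "c * x \<in> {u + v | u v. u \<in> X \<and> v \<in> Y}" by blast
qed

lemma fq_subspace_sum:
  assumes U: "fq_subspace F U" and "finite T" "T \<subseteq> U" "\<forall>t\<in>T. c t \<in> F"
  shows "(\<Sum>t\<in>T. c t * t) \<in> U"
  using assms(2-4)
proof (induction T rule: finite_induct)
  case empty
  then show ?case using fq_subspace_0[OF U] by simp
next
  case (insert t T)
  then have "c t * t \<in> U" "(\<Sum>t\<in>T. c t * t) \<in> U" using fq_subspace_scale[OF U] by auto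
  then show ?case using insert fq_subspace_add[OF U] by simp
qed

lemma fq_span_subset: "fq_subspace F U \<Longrightarrow> S \<subseteq> U \<Longrightarrow> fq_span F S \<subseteq> U"
  unfolding fq_span_def using fq_subspace_sum by blast

lemma fq_span_self:
  assumes "fq_subspace F U" "1 \<in> F"
  shows "fq_span F U = U"
proof
  show "fq_span F U \<subseteq> U" using fq_span_subset[OF assms(1)] by blast
  show "U \<subseteq> fq_span F U"
  proof
    fix x assume "x \<in> U"
    then show "x \<in> fq_span F U"
      unfolding fq_span_def using assms(2)
      by (intro CollectI exI[of _ "\<lambda>_. 1"] exI[of _ "{x}"]) auto
  qed
qed

lemma fq_span_finite:
  assumes S: "finite S" and F: "0 \<in> F"
  shows "fq_span F S = (\<lambda>c. \<Sum>t\<in>S. c t * t) ` (S \<rightarrow>\<^sub>E F)"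
proof
  show "fq_span F S \<subseteq> (\<lambda>c. \<Sum>t\<in>S. c t * t) ` (S \<rightarrow>\<^sub>E F)"
  proof
    fix x assume "x \<in> fq_span F S"
    then obtain c T where cT: "T \<subseteq> S" "\<forall>t\<in>T. c t \<in> F" "x = (\<Sum>t\<in>T. c t * t)"
      unfolding fq_span_def by blast
    define c' where "c' = restrict (\<lambda>t. if t \<in> T then c t else 0) S"
    have "c' \<in> S \<rightarrow>\<^sub>E F" using cT(2) F by (auto simp: c'_def)
    moreover have "(\<Sum>t\<in>S. c' t * t) = (\<Sum>t\<in>S. if t \<in> T then c t * t else 0)"
      by (rule sum.cong) (auto simp: c'_def)
    moreover have "\<dots> = x"
      using sum.inter_restrict[OF S, of "\<lambda>t. c t * t" T] cT(1,3) by (simp add: Int_absorb1)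
    ultimately show "x \<in> (\<lambda>c. \<Sum>t\<in>S. c t * t) ` (S \<rightarrow>\<^sub>E F)" by force
  qed
  show "(\<lambda>c. \<Sum>t\<in>S. c t * t) ` (S \<rightarrow>\<^sub>E F) \<subseteq> fq_span F S"
    unfolding fq_span_def using S by (auto simp: PiE_iff)
qed

lemma fq_span_remove_dependent:
  assumes F: "is_subfield F" and S: "finite S" "t0 \<in> S"
    and d: "d \<in> S \<rightarrow> F" "d t0 \<noteq> 0" "(\<Sum>t\<in>S. d t * t) = 0"
  shows "fq_span F (S - {t0}) = fq_span F S"
proof
  show "fq_span F (S - {t0}) \<subseteq> fq_span F S" unfolding fq_span_def by blast
  show "fq_span F S \<subseteq> fq_span F (S - {t0})"
  proof
    fix x assume "x \<in> fq_span F S"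
    then obtain c where c: "c \<in> S \<rightarrow>\<^sub>E F" and x: "x = (\<Sum>t\<in>S. c t * t)"
      using fq_span_finite[OF S(1) is_subfield_0[OF F]] by blast
    define c' where "c' t = c t - c t0 / d t0 * d t" for t
    have c'F: "c' t \<in> F" if "t \<in> S" for t
      using that c d(1) S(2) unfolding c'_def
      by (blast intro: is_subfield_diff[OF F] is_subfield_mult[OF F] is_subfield_divide[OF F])
    have "(\<Sum>t\<in>S. c' t * t) = x - c t0 / d t0 * (\<Sum>t\<in>S. d t * t)"
      by (simp add: c'_def x algebra_simps sum_subtractf sum_distrib_left)
    also have "\<dots> = x" using d(3) by simp
    finally have "x = c' t0 * t0 + (\<Sum>t\<in>S - {t0}. c' t * t)"
      using sum.remove[OF S, of "\<lambda>t. c' t * t"] by simp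
    moreover have "c' t0 = 0" using d(2) by (simp add: c'_def)
    ultimately have "x = (\<Sum>t\<in>S - {t0}. c' t * t)" by simp
    then show "x \<in> fq_span F (S - {t0})" unfolding fq_span_def using S(1) c'F by blast
  qed
qed

lemma fq_dim_le_card:
  assumes "finite S" "S \<subseteq> U" "fq_span F S = U"
  shows "fq_dim F U \<le> card S"
  unfolding fq_dim_def by (rule Least_le) (use assms in blast)

lemma fq_dim_spanning_set:
  fixes U :: "'a::{field,finite} set"
  assumes "fq_subspace F U" "1 \<in> F"
  obtains S where "S \<subseteq> U" "card S = fq_dim F U" "fq_span F S = U"
proof -
  have "\<exists>d S. finite S \<and> S \<subseteq> U \<and> card S = d \<and> fq_span F S = U"
    using fq_span_self[OF assms] by (intro exI[of _ "card U"] exI[of _ U]) simp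
  then have "\<exists>S. finite S \<and> S \<subseteq> U \<and> card S = fq_dim F U \<and> fq_span F S = U"
    unfolding fq_dim_def by (rule LeastI_ex)
  with that show ?thesis by blast
qed

text \<open>A spanning set of minimal size is linearly independent, since a dependence would let
  one of its vectors be dropped.\<close>

lemma card_fq_subspace:
  fixes U :: "'a::{field,finite} set"
  assumes F: "is_subfield F" and U: "fq_subspace F U"
  shows "card U = card F ^ fq_dim F U"
proof -
  obtain S where S: "S \<subseteq> U" "card S = fq_dim F U" "fq_span F S = U"
    using fq_dim_spanning_set[OF U is_subfield_1[OF F]] .
  have fin: "finite S" by simp
  define L where "L c = (\<Sum>t\<in>S. c t * t)" for c
  have U_eq: "U = L ` (S \<rightarrow>\<^sub>E F)"
    using fq_span_finite[OF fin is_subfield_0[OF F]] S(3) unfolding L_def by simp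
  have "inj_on L (S \<rightarrow>\<^sub>E F)"
  proof
    fix c c' assume c: "c \<in> S \<rightarrow>\<^sub>E F" and c': "c' \<in> S \<rightarrow>\<^sub>E F" and eq: "L c = L c'"
    show "c = c'"
    proof (rule ccontr)
      assume "c \<noteq> c'"
      then obtain t0 where t0: "t0 \<in> S" "c t0 \<noteq> c' t0" using PiE_ext[OF c c'] by blast
      have "(\<lambda>t. c t - c' t) \<in> S \<rightarrow> F" using c c' by (auto intro: is_subfield_diff[OF F])
      moreover have "(\<Sum>t\<in>S. (c t - c' t) * t) = 0"
        using eq by (simp add: L_def left_diff_distrib sum_subtractf)
      ultimately have "fq_span F (S - {t0}) = U"
        using fq_span_remove_dependent[OF F fin t0(1)] t0(2) S(3) by simp
      then have "fq_dim F U \<le> card (S - {t0})" using S(1) by (intro fq_dim_le_card) auto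
      moreover have "card (S - {t0}) < card S" using fin t0(1) by (rule card_Diff1_less)
      ultimately show False using S(2) by simp
    qed
  qed
  then have "card U = card (S \<rightarrow>\<^sub>E F)" unfolding U_eq by (rule card_image)
  also have "\<dots> = card F ^ fq_dim F U" using fin S(2) by (simp add: card_PiE)
  finally show ?thesis .
qed

lemma fq_dim_eq_of_card:
  fixes U :: "'a::{field,finite} set"
  assumes F: "is_subfield F" and U: "fq_subspace F U" and card: "card U = card F ^ d"
  shows "fq_dim F U = d"
  using card_fq_subspace[OF F U] card card_is_subfield_ge_2[OF F] by (simp add: power_inject_exp)

lemma fq_dim_mono:
  fixes X Y :: "'a::{field,finite} set"
  assumes F: "is_subfield F" and X: "fq_subspace F X" and Y: "fq_subspace F Y" and "X \<subseteq> Y"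
  shows "fq_dim F X \<le> fq_dim F Y"
proof -
  have "card F ^ fq_dim F X \<le> card F ^ fq_dim F Y"
    using card_mono[OF _ \<open>X \<subseteq> Y\<close>] card_fq_subspace[OF F X] card_fq_subspace[OF F Y] by simp
  then show ?thesis using card_is_subfield_ge_2[OF F] by (simp add: power_le_imp_le_exp)
qed

text \<open>The fibres of the addition map \<open>X \<times> Y \<rightarrow> X + Y\<close> are cosets of \<open>X \<inter> Y\<close>.\<close>

lemma card_set_plus_mult_card_Int:
  fixes X Y :: "'a::{field,finite} set"
  assumes F: "is_subfield F" and X: "fq_subspace F X" and Y: "fq_subspace F Y"
  shows "card {u + v | u v. u \<in> X \<and> v \<in> Y} * card (X \<inter> Y) = card X * card Y"
proof -
  define Z where "Z = {u + v | u v. u \<in> X \<and> v \<in> Y}"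
  define fibre where "fibre z = {p \<in> X \<times> Y. fst p + snd p = z}" for z
  have card_fibre: "card (fibre z) = card (X \<inter> Y)" if "z \<in> Z" for z
  proof -
    obtain x0 y0 where z: "z = x0 + y0" "x0 \<in> X" "y0 \<in> Y" using \<open>z \<in> Z\<close> unfolding Z_def by blast
    have "(\<lambda>w. (x0 + w, y0 - w)) ` (X \<inter> Y) = fibre z"
    proof
      show "(\<lambda>w. (x0 + w, y0 - w)) ` (X \<inter> Y) \<subseteq> fibre z"
      proof
        fix p assume "p \<in> (\<lambda>w. (x0 + w, y0 - w)) ` (X \<inter> Y)"
        then obtain w where w: "w \<in> X" "w \<in> Y" "p = (x0 + w, y0 - w)" by blast
        have "x0 + w \<in> X" using z(2) w(1) by (rule fq_subspace_add[OF X])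
        moreover have "y0 - w \<in> Y" using z(3) w(2) by (rule fq_subspace_diff[OF F Y])
        ultimately show "p \<in> fibre z" using w(3) z(1) by (simp add: fibre_def)
      qed
      show "fibre z \<subseteq> (\<lambda>w. (x0 + w, y0 - w)) ` (X \<inter> Y)"
      proof
        fix p assume "p \<in> fibre z"
        then obtain x y where p: "p = (x, y)" "x \<in> X" "y \<in> Y" "x + y = x0 + y0"
          unfolding fibre_def z(1) by auto
        have "x - x0 \<in> X" using p(2) z(2) by (rule fq_subspace_diff[OF F X])
        moreover have "y0 - y \<in> Y" using z(3) p(3) by (rule fq_subspace_diff[OF F Y])
        moreover have "x - x0 = y0 - y" using p(4) by (simp add: algebra_simps)
        ultimately have "x - x0 \<in> X \<inter> Y" by simp
        moreover have "p = (x0 + (x - x0), y0 - (x - x0))" using p(1,4) by (simp add: algebra_simps)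
        ultimately show "p \<in> (\<lambda>w. (x0 + w, y0 - w)) ` (X \<inter> Y)" by blast
      qed
    qed
    moreover have "inj_on (\<lambda>w. (x0 + w, y0 - w)) (X \<inter> Y)" by (rule inj_onI) simp
    ultimately show ?thesis using card_image by fastforce
  qed
  have "X \<times> Y = (\<Union>z\<in>Z. fibre z)"
  proof
    show "X \<times> Y \<subseteq> (\<Union>z\<in>Z. fibre z)"
    proof
      fix p assume p: "p \<in> X \<times> Y"
      then have "fst p + snd p \<in> Z"
        unfolding Z_def by (intro CollectI exI[of _ "fst p"] exI[of _ "snd p"]) auto
      then show "p \<in> (\<Union>z\<in>Z. fibre z)" using p unfolding fibre_def by blast
    qed
    show "(\<Union>z\<in>Z. fibre z) \<subseteq> X \<times> Y" unfolding fibre_def by blast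
  qed
  then have "card (X \<times> Y) = (\<Sum>z\<in>Z. card (fibre z))"
    by (simp only:) (rule card_UN_disjoint, auto simp: fibre_def)
  also have "\<dots> = (\<Sum>z\<in>Z. card (X \<inter> Y))" by (rule sum.cong) (simp_all add: card_fibre)
  also have "\<dots> = card Z * card (X \<inter> Y)" by simp
  finally have "card X * card Y = card Z * card (X \<inter> Y)" by (simp add: card_cartesian_product)
  then show ?thesis unfolding Z_def by simp
qed

lemma sdist_eq:
  fixes X Y :: "'a::{field,finite} set"
  assumes F: "is_subfield (subfield q 1 :: 'a set)"
    and X: "fq_subspace (subfield q 1) X" and Y: "fq_subspace (subfield q 1) Y"
    and dim: "fq_dim (subfield q 1) X = k" "fq_dim (subfield q 1) Y = k"
  shows "sdist q X Y = 2 * k - 2 * fq_dim (subfield q 1) (X \<inter> Y)"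
proof -
  let ?F = "subfield q 1 :: 'a set"
  let ?Z = "{u + v | u v. u \<in> X \<and> v \<in> Y}"
  have "card ?F ^ (fq_dim ?F ?Z + fq_dim ?F (X \<inter> Y)) = card ?Z * card (X \<inter> Y)"
    unfolding power_add card_fq_subspace[OF F fq_subspace_set_plus[OF X Y]]
      card_fq_subspace[OF F fq_subspace_Int[OF X Y]] ..
  also have "\<dots> = card X * card Y" by (rule card_set_plus_mult_card_Int[OF F X Y])
  also have "\<dots> = card ?F ^ (k + k)"
    unfolding power_add card_fq_subspace[OF F X] card_fq_subspace[OF F Y] dim ..
  finally have "fq_dim ?F ?Z + fq_dim ?F (X \<inter> Y) = k + k"
    using card_is_subfield_ge_2[OF F] by (simp add: power_inject_exp)
  then show ?thesis unfolding sdist_def by simp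
qed

lemma fq_linear_on_0:
  assumes "fq_linear_on q A g" "0 \<in> A"
  shows "g 0 = 0"
proof -
  have "g (0 + 0) = g 0 + g 0" using assms unfolding fq_linear_on_def by blast
  then show ?thesis by (metis add_0 add_cancel_right_right)
qed

lemma fq_linear_on_add: "fq_linear_on q A g \<Longrightarrow> x \<in> A \<Longrightarrow> y \<in> A \<Longrightarrow> g (x + y) = g x + g y"
  unfolding fq_linear_on_def by blast

lemma fq_linear_on_mult:
  "fq_linear_on q A g \<Longrightarrow> c \<in> subfield q 1 \<Longrightarrow> x \<in> A \<Longrightarrow> g (c * x) = c * g x"
  unfolding fq_linear_on_def by blast

lemma fq_linear_on_scale: "fq_linear_on q A g \<Longrightarrow> fq_linear_on q A (\<lambda>x. \<beta> * g x)"
  unfolding fq_linear_on_def by (simp add: algebra_simps)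

lemma fq_subspace_image:
  fixes g :: "'a::{field,finite} \<Rightarrow> 'a"
  assumes g: "fq_linear_on q A g" and ZA: "Z \<subseteq> A" and Z: "fq_subspace (subfield q 1) Z"
  shows "fq_subspace (subfield q 1) (g ` Z)"
  unfolding fq_subspace_def
proof (intro conjI ballI)
  have "g 0 = 0" using fq_linear_on_0[OF g] fq_subspace_0[OF Z] ZA by blast
  then show "0 \<in> g ` Z" using fq_subspace_0[OF Z] by (metis image_eqI)
next
  fix x y assume "x \<in> g ` Z" "y \<in> g ` Z"
  then obtain u v where uv: "u \<in> Z" "v \<in> Z" "x = g u" "y = g v" by blast
  then have "x + y = g (u + v)" using ZA by (simp add: fq_linear_on_add[OF g] subsetD)
  moreover have "u + v \<in> Z" using uv(1,2) by (rule fq_subspace_add[OF Z])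
  ultimately show "x + y \<in> g ` Z" by blast
next
  fix c x :: 'a assume c: "c \<in> subfield q 1" and "x \<in> g ` Z"
  then obtain u where u: "u \<in> Z" "x = g u" by blast
  then have "c * x = g (c * u)" using ZA c by (simp add: fq_linear_on_mult[OF g] subsetD)
  moreover have "c * u \<in> Z" using c u(1) by (rule fq_subspace_scale[OF Z])
  ultimately show "c * x \<in> g ` Z" by blast
qed

lemma fq_dim_image:
  fixes Z :: "'a::{field,finite} set"
  assumes F: "is_subfield (subfield q 1 :: 'a set)"
    and g: "fq_linear_on q A g" "inj_on g A" and ZA: "Z \<subseteq> A" and Z: "fq_subspace (subfield q 1) Z"
  shows "fq_dim (subfield q 1) (g ` Z) = fq_dim (subfield q 1) Z"
proof -
  have "card (g ` Z) = card Z" using inj_on_subset[OF g(2) ZA] by (rule card_image)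
  then show ?thesis
    using card_fq_subspace[OF F Z] fq_dim_eq_of_card[OF F fq_subspace_image[OF g(1) ZA Z]]
    by simp
qed

lemma fq_linear_on_image_set_plus:
  assumes g: "fq_linear_on q A g" and "Z1 \<subseteq> A" "Z2 \<subseteq> A"
  shows "g ` {u + v | u v. u \<in> Z1 \<and> v \<in> Z2} = {u + v | u v. u \<in> g ` Z1 \<and> v \<in> g ` Z2}"
proof -
  have add: "g (u + v) = g u + g v" if "u \<in> Z1" "v \<in> Z2" for u v
    using assms(2,3) that by (simp add: fq_linear_on_add[OF g] subsetD)
  show ?thesis
  proof (intro equalityI subsetI)
    fix y assume "y \<in> g ` {u + v | u v. u \<in> Z1 \<and> v \<in> Z2}"
    then obtain u v where "u \<in> Z1" "v \<in> Z2" "y = g (u + v)" by blast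
    then show "y \<in> {u + v | u v. u \<in> g ` Z1 \<and> v \<in> g ` Z2}" using add by blast
  next
    fix y assume "y \<in> {u + v | u v. u \<in> g ` Z1 \<and> v \<in> g ` Z2}"
    then obtain u v where uv: "u \<in> Z1" "v \<in> Z2" "y = g u + g v" by blast
    then have "y = g (u + v)" using add by simp
    moreover have "u + v \<in> {u + v | u v. u \<in> Z1 \<and> v \<in> Z2}" using uv(1,2) by blast
    ultimately show "y \<in> g ` {u + v | u v. u \<in> Z1 \<and> v \<in> Z2}" by blast
  qed
qed

lemma sdist_image:
  fixes Z1 Z2 :: "'a::{field,finite} set"
  assumes F: "is_subfield (subfield q 1 :: 'a set)"
    and g: "fq_linear_on q A g" "inj_on g A" and A: "fq_subspace (subfield q 1) A"
    and Z: "Z1 \<subseteq> A" "Z2 \<subseteq> A" "fq_subspace (subfield q 1) Z1" "fq_subspace (subfield q 1) Z2"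
  shows "sdist q (g ` Z1) (g ` Z2) = sdist q Z1 Z2"
proof -
  let ?S = "{u + v | u v. u \<in> Z1 \<and> v \<in> Z2}"
  have "?S \<subseteq> A" using Z(1,2) fq_subspace_add[OF A] by blast
  have "fq_dim (subfield q 1) (g ` ?S) = fq_dim (subfield q 1) ?S"
    by (rule fq_dim_image[OF F g \<open>?S \<subseteq> A\<close> fq_subspace_set_plus[OF Z(3,4)]])
  moreover have "fq_dim (subfield q 1) (g ` (Z1 \<inter> Z2)) = fq_dim (subfield q 1) (Z1 \<inter> Z2)"
    using Z by (intro fq_dim_image[OF F g _ fq_subspace_Int]) auto
  ultimately show ?thesis
    unfolding sdist_def fq_linear_on_image_set_plus[OF g(1) Z(1,2), symmetric]
      inj_on_image_Int[OF g(2) Z(1,2), symmetric] by simp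
qed

section \<open>The subfields of a finite field\<close>

lemma subfield_mult: "x \<in> subfield q N \<Longrightarrow> y \<in> subfield q N \<Longrightarrow> x * y \<in> subfield q N"
  by (simp add: subfield_def power_mult_distrib)

lemma subfield_inverse: "x \<in> subfield q N \<Longrightarrow> inverse x \<in> subfield q N"
  by (simp add: subfield_def power_inverse)

lemma subfield_1: "1 \<in> subfield q N"
  by (simp add: subfield_def)

lemma subfield_1_subset: "subfield q 1 \<subseteq> subfield q N"
proof
  fix x :: 'a assume "x \<in> subfield q 1"
  then have "x ^ q = x" by (simp add: subfield_def)
  then have "x ^ (q ^ N) = x" by (induction N) (simp_all add: power_mult mult.commute)
  then show "x \<in> subfield q N" by (simp add: subfield_def)
qed

text \<open>Closure under addition is the Frobenius identity \<open>(x + y) ^ p = x ^ p + y ^ p\<close>; applied to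
  \<open>x + (- x) = 0\<close> it also gives closure under negation.\<close>

lemma is_subfield_subfield:
  assumes q: "q = CHAR('a::{field,finite}) ^ a"
  shows "is_subfield (subfield q N :: 'a set)"
proof -
  have p: "prime CHAR('a)" by (rule prime_CHAR_semidom) (simp add: finite_imp_CHAR_pos)
  have qN: "q ^ N = CHAR('a) ^ (a * N)" by (simp add: q power_mult)
  have add: "(x + y) ^ (q ^ N) = x ^ (q ^ N) + y ^ (q ^ N)" for x y :: 'a
    using freshmans_dream'[OF p qN] .
  have "q ^ N > 0" using p qN by (simp add: prime_gt_0_nat)
  then have zero: "(0::'a) \<in> subfield q N" by (simp add: subfield_def)
  have "- x \<in> subfield q N" if "x \<in> subfield q N" for x :: 'a
  proof -
    have "x ^ (q ^ N) + (- x) ^ (q ^ N) = 0" using add[of x "- x"] zero by (simp add: subfield_def)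
    then show ?thesis using that by (simp add: subfield_def add_eq_0_iff)
  qed
  then show ?thesis
    unfolding is_subfield_def
    using zero add subfield_1 subfield_mult subfield_inverse by (auto simp: subfield_def)
qed

lemma fq_subspace_subfield:
  assumes "q = CHAR('a::{field,finite}) ^ a"
  shows "fq_subspace (subfield q 1) (subfield q N :: 'a set)"
  using is_subfield_subfield[OF assms] subfield_1_subset
  unfolding fq_subspace_def is_subfield_def by blast

lemma CHAR_eq_of_card_UNIV:
  assumes "prime p" "card (UNIV :: 'a::{field,finite} set) = p ^ j"
  shows "CHAR('a) = p"
proof -
  have "prime CHAR('a)" by (rule prime_CHAR_semidom) (simp add: finite_imp_CHAR_pos)
  moreover have "CHAR('a) dvd p ^ j" using CHAR_dvd_CARD[where 'a='a] assms(2) by simp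
  ultimately show ?thesis using assms(1) prime_dvd_power primes_dvd_imp_eq by metis
qed

lemma CHAR_power_if_prime_power_card:
  assumes "\<exists>p a. prime p \<and> a > 0 \<and> q = p ^ a" and "card (UNIV :: 'a::{field,finite} set) = q ^ n"
  obtains a where "q = CHAR('a) ^ a"
proof -
  obtain p a where p: "prime p" "q = p ^ a" using assms(1) by blast
  have "card (UNIV :: 'a set) = p ^ (a * n)" using assms(2) p(2) by (simp add: power_mult)
  then have "CHAR('a) = p" by (rule CHAR_eq_of_card_UNIV[OF p(1)])
  then show ?thesis using that p(2) by blast
qed

text \<open>Fermat's little theorem, from Lagrange's theorem in the unit group.\<close>

lemma power_card_UNIV_eq:
  fixes x :: "'a::{field,finite}"
  shows "x ^ card (UNIV :: 'a set) = x"
proof (cases "x = 0")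
  case False
  define G :: "'a monoid" where "G = \<lparr>carrier = UNIV, mult = (*), one = 1\<rparr>"
  interpret monoid G by unfold_locales (simp_all add: G_def mult.assoc)
  have Units: "Units G = UNIV - {0}"
    by (auto simp: Units_def G_def) (metis left_inverse right_inverse)
  have pow: "y [^]\<^bsub>units_of G\<^esub> k = y ^ k" for y and k :: nat
    by (induction k) (simp_all add: units_of_def G_def)
  interpret units: group "units_of G" by (rule units_group)
  have "x [^]\<^bsub>units_of G\<^esub> Coset.order (units_of G) = \<one>\<^bsub>units_of G\<^esub>"
    by (rule units.pow_order_eq_1) (simp add: units_of_carrier Units False)
  then have "x ^ (card (UNIV :: 'a set) - 1) = 1"
    unfolding pow Coset.order_def units_of_carrier Units units_of_one
    by (simp add: G_def card_Diff_singleton)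
  moreover have "card (UNIV :: 'a set) = Suc (card (UNIV :: 'a set) - 1)"
    using finite_UNIV_card_ge_0[where ?'a = 'a] by simp
  ultimately show ?thesis
    by (metis power_Suc mult_1_right)
qed (simp add: finite_UNIV_card_ge_0)

lemma card_subfield_le:
  assumes "2 \<le> q" "1 \<le> N"
  shows "card (subfield q N :: 'a::{field,finite} set) \<le> q ^ N"
proof -
  define P :: "'a poly" where "P = monom 1 (q ^ N) - monom 1 1"
  have qN: "2 \<le> q ^ N" using assms order_trans[OF _ power_increasing[of 1 N q]] by simp
  then have "coeff P (q ^ N) = 1" by (simp add: P_def coeff_monom)
  then have "P \<noteq> 0" by auto
  have "degree P \<le> q ^ N"
    unfolding P_def by (rule degree_diff_le) (use qN in \<open>auto simp: degree_monom_eq\<close>)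
  have "subfield q N = {x. poly P x = 0}"
    by (simp add: P_def subfield_def poly_monom)
  then show ?thesis
    using card_poly_roots_bound[OF \<open>P \<noteq> 0\<close>] \<open>degree P \<le> q ^ N\<close> by simp
qed

lemma geometric_sum_nat:
  assumes "1 \<le> q"
  shows "(q - 1) * (\<Sum>i<n. q ^ i) + 1 = (q::nat) ^ n"
proof (induction n)
  case (Suc n)
  have "(q - 1) * (\<Sum>i<Suc n. q ^ i) + 1 = ((q - 1) * (\<Sum>i<n. q ^ i) + 1) + (q - 1) * q ^ n"
    by (simp add: algebra_simps)
  also have "\<dots> = q * q ^ n" using Suc assms by (simp add: algebra_simps)
  finally show ?case by simp
qed simp

text \<open>Every element is a root of \<open>X ^ q - X\<close> or of the polynomial \<open>g\<close> below, of degree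
  \<open>q ^ n - q\<close>, because \<open>(X ^ q - X) * g = X ^ (q ^ n) - X\<close> vanishes identically.\<close>

lemma card_subfield_1_ge:
  assumes q: "2 \<le> q" and n: "0 < n" and card: "card (UNIV :: 'a::{field,finite} set) = q ^ n"
  shows "q \<le> card (subfield q 1 :: 'a set)"
proof -
  define M where "M = (\<Sum>i<n. q ^ i)"
  have M: "(q - 1) * M + 1 = q ^ n" unfolding M_def using geometric_sum_nat q by simp
  have "1 \<le> M" unfolding M_def using n by (simp add: sum.remove[of "{..<n}" 0])
  define g :: "'a poly" where "g = (\<Sum>j<M. monom 1 ((q - 1) * j))"
  have poly_g: "poly g x = (\<Sum>j<M. (x ^ (q - 1)) ^ j)" for x
    by (simp add: g_def poly_sum poly_monom power_mult)
  have "poly g 0 = 1"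
    unfolding poly_g using \<open>1 \<le> M\<close> q by (simp add: sum.remove[of "{..<M}" 0] power_0_left)
  then have "g \<noteq> 0" by auto
  have "degree g \<le> (q - 1) * (M - 1)" unfolding g_def
    by (rule degree_sum_le) (auto intro!: order_trans[OF degree_monom_le] mult_le_mono2)
  also have "\<dots> = q ^ n - q" using M q by (simp add: diff_mult_distrib2)
  finally have deg: "degree g \<le> q ^ n - q" .
  have cover: "UNIV \<subseteq> subfield q 1 \<union> {x :: 'a. poly g x = 0}"
  proof
    fix x :: 'a
    define y where "y = x ^ (q - 1)"
    have "x ^ q = x * y" using q by (simp add: y_def power_eq_if)
    then have "(x ^ q - x) * poly g x = x * ((y - 1) * (\<Sum>j<M. y ^ j))"
      by (simp add: poly_g y_def algebra_simps)
    also have "\<dots> = x * (y ^ M - 1)" by (simp only: power_diff_1_eq)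
    also have "\<dots> = x * y ^ M - x" by (simp add: right_diff_distrib)
    also have "x * y ^ M = x ^ card (UNIV :: 'a set)"
      unfolding y_def card M[symmetric] by (simp add: power_mult)
    also have "\<dots> = x" by (rule power_card_UNIV_eq)
    finally show "x \<in> subfield q 1 \<union> {x. poly g x = 0}" by (auto simp: subfield_def)
  qed
  have "card (UNIV :: 'a set) \<le> card (subfield q 1 \<union> {x :: 'a. poly g x = 0})"
    using cover by (intro card_mono) auto
  also have "\<dots> \<le> card (subfield q 1 :: 'a set) + card {x :: 'a. poly g x = 0}"
    by (rule card_Un_le)
  finally have "q ^ n \<le> card (subfield q 1 :: 'a set) + card {x :: 'a. poly g x = 0}"
    unfolding card .
  moreover have "card {x :: 'a. poly g x = 0} \<le> q ^ n - q"
    using card_poly_roots_bound[OF \<open>g \<noteq> 0\<close>] deg by simp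
  moreover have "q \<le> q ^ n" using n q by (simp add: self_le_power)
  ultimately show ?thesis by linarith
qed

lemma card_subfield_1:
  assumes q: "q = CHAR('a::{field,finite}) ^ a" and card: "card (UNIV :: 'a set) = q ^ n"
  shows "card (subfield q 1 :: 'a set) = q"
proof -
  have "2 \<le> q ^ n"
    using card card_is_subfield_ge_2[of "UNIV :: 'a set"] by (simp add: is_subfield_def)
  then have "n \<noteq> 0" by (cases n) auto
  have "2 \<le> q"
  proof (rule ccontr)
    assume "\<not> 2 \<le> q"
    then have "q ^ n \<le> 1" by (intro power_le_one) auto
    with \<open>2 \<le> q ^ n\<close> show False by simp
  qed
  then show ?thesis
    using card_subfield_le[where 'a='a, of q 1] card_subfield_1_ge[OF _ _ card] \<open>n \<noteq> 0\<close> by simp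
qed

section \<open>Codes and orbits\<close>

lemma min_dist_eq_enat_iff:
  "min_dist q C = enat d \<longleftrightarrow>
     (\<forall>X\<in>C. \<forall>Y\<in>C. X \<noteq> Y \<longrightarrow> d \<le> sdist q X Y) \<and> (\<exists>X\<in>C. \<exists>Y\<in>C. X \<noteq> Y \<and> sdist q X Y = d)"
proof -
  define A where "A = {enat (sdist q U V) | U V. U \<in> C \<and> V \<in> C \<and> U \<noteq> V}"
  have md: "min_dist q C = Inf A" unfolding min_dist_def A_def ..
  have lower: "Inf A \<le> enat (sdist q X Y)" if "X \<in> C" "Y \<in> C" "X \<noteq> Y" for X Y
    unfolding A_def by (rule Inf_lower) (use that in blast)
  show ?thesis
  proof
    assume eq: "min_dist q C = enat d"
    have "A \<noteq> {}"
    proof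
      assume "A = {}"
      then show False using eq md by (simp add: top_enat_def)
    qed
    then have "Inf A \<in> A" unfolding Inf_enat_def by (auto intro: LeastI)
    then have "\<exists>X\<in>C. \<exists>Y\<in>C. X \<noteq> Y \<and> sdist q X Y = d" using eq md unfolding A_def by auto
    moreover have "\<forall>X\<in>C. \<forall>Y\<in>C. X \<noteq> Y \<longrightarrow> d \<le> sdist q X Y" using lower eq md by fastforce
    ultimately show "(\<forall>X\<in>C. \<forall>Y\<in>C. X \<noteq> Y \<longrightarrow> d \<le> sdist q X Y)
        \<and> (\<exists>X\<in>C. \<exists>Y\<in>C. X \<noteq> Y \<and> sdist q X Y = d)" by blast
  next
    assume "(\<forall>X\<in>C. \<forall>Y\<in>C. X \<noteq> Y \<longrightarrow> d \<le> sdist q X Y)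
        \<and> (\<exists>X\<in>C. \<exists>Y\<in>C. X \<noteq> Y \<and> sdist q X Y = d)"
    then have ge: "\<forall>X\<in>C. \<forall>Y\<in>C. X \<noteq> Y \<longrightarrow> d \<le> sdist q X Y"
      and "\<exists>X\<in>C. \<exists>Y\<in>C. X \<noteq> Y \<and> sdist q X Y = d" by blast+
    then obtain X Y where XY: "X \<in> C" "Y \<in> C" "X \<noteq> Y" "sdist q X Y = d" by blast
    show "min_dist q C = enat d" unfolding md
    proof (rule antisym)
      show "Inf A \<le> enat d" using lower[OF XY(1-3)] XY(4) by simp
      show "enat d \<le> Inf A" unfolding A_def
      proof (rule Inf_greatest)
        fix x assume "x \<in> {enat (sdist q U V) | U V. U \<in> C \<and> V \<in> C \<and> U \<noteq> V}"
        then obtain U V where "x = enat (sdist q U V)" "U \<in> C" "V \<in> C" "U \<noteq> V" by blast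
        then show "enat d \<le> x" using ge by simp
      qed
    qed
  qed
qed

lemma image_mult_image_mult:
  "(\<lambda>x. c * x) ` (\<lambda>x. d * x) ` V = (\<lambda>x. (c * d) * x) ` (V :: 'a::semigroup_mult set)"
  by (simp add: image_image mult.assoc)

lemma orb_eq_if_scaled_eq:
  fixes V V' :: "'a::{field,finite} set"
  assumes "\<beta> \<in> subfield q M" "\<beta> \<noteq> 0" "\<beta>' \<in> subfield q M" "\<beta>' \<noteq> 0"
    and eq: "(\<lambda>x. \<beta> * x) ` V = (\<lambda>x. \<beta>' * x) ` V'"
  shows "orb q M V = orb q M V'"
proof -
  have sub: "orb q M V \<subseteq> orb q M V'"
    if \<beta>: "\<beta> \<in> subfield q M" "\<beta> \<noteq> 0" and \<beta>': "\<beta>' \<in> subfield q M" "\<beta>' \<noteq> 0"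
      and eq: "(\<lambda>x. \<beta> * x) ` V = (\<lambda>x. \<beta>' * x) ` V'" for \<beta> \<beta>' :: 'a and V V'
  proof
    fix W assume "W \<in> orb q M V"
    then obtain \<gamma> where \<gamma>: "\<gamma> \<in> subfield q M" "\<gamma> \<noteq> 0" "W = (\<lambda>x. \<gamma> * x) ` V"
      unfolding orb_def by blast
    have "W = (\<lambda>x. (\<gamma> * inverse \<beta>) * x) ` (\<lambda>x. \<beta> * x) ` V"
      unfolding image_mult_image_mult \<gamma>(3) using \<beta>(2) by (simp add: mult.assoc)
    also have "\<dots> = (\<lambda>x. (\<gamma> * inverse \<beta> * \<beta>') * x) ` V'"
      unfolding eq image_mult_image_mult ..
    finally have "W = (\<lambda>x. (\<gamma> * inverse \<beta> * \<beta>') * x) ` V'" .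
    moreover have "\<gamma> * inverse \<beta> * \<beta>' \<in> subfield q M"
      using \<gamma>(1) \<beta>(1) \<beta>'(1) by (intro subfield_mult subfield_inverse)
    moreover have "\<gamma> * inverse \<beta> * \<beta>' \<noteq> 0" using \<gamma>(2) \<beta>(2) \<beta>'(2) by simp
    ultimately show "W \<in> orb q M V'" unfolding orb_def by blast
  qed
  show ?thesis using sub[OF assms] sub[OF assms(3,4,1,2) eq[symmetric]] by blast
qed

lemma scale_fq_subspace:
  fixes Z :: "'a::{field,finite} set"
  assumes "\<gamma> \<in> subfield q 1" "\<gamma> \<noteq> 0" "fq_subspace (subfield q 1) Z"
  shows "(\<lambda>x. \<gamma> * x) ` Z = Z"
proof (rule card_subset_eq)
  show "finite Z" by simp
  show "(\<lambda>x. \<gamma> * x) ` Z \<subseteq> Z" using fq_subspace_scale[OF assms(3,1)] by blast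
  have "inj_on (\<lambda>x. \<gamma> * x) Z" using assms(2) by (simp add: inj_on_def)
  then show "card ((\<lambda>x. \<gamma> * x) ` Z) = card Z" by (rule card_image)
qed

text \<open>The codewords themselves serve as orbit representatives.\<close>

lemma cyclic_codeI:
  assumes "C \<subseteq> Grass q N k"
    and closed: "\<And>\<beta> X. \<beta> \<in> subfield q N \<Longrightarrow> \<beta> \<noteq> 0 \<Longrightarrow> X \<in> C \<Longrightarrow> (\<lambda>x. \<beta> * x) ` X \<in> C"
  shows "cyclic_code q N k C"
proof -
  have "C = \<Union> (orb q N ` C)"
  proof
    show "C \<subseteq> \<Union> (orb q N ` C)"
    proof
      fix X assume "X \<in> C"
      moreover have "X \<in> orb q N X"
        unfolding orb_def using subfield_1 by (intro CollectI exI[of _ 1]) simp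
      ultimately show "X \<in> \<Union> (orb q N ` C)" by blast
    qed
    show "\<Union> (orb q N ` C) \<subseteq> C"
    proof
      fix Y assume "Y \<in> \<Union> (orb q N ` C)"
      then obtain X \<beta> where "X \<in> C" "\<beta> \<in> subfield q N" "\<beta> \<noteq> 0" "Y = (\<lambda>x. \<beta> * x) ` X"
        unfolding orb_def by blast
      then show "Y \<in> C" using closed by blast
    qed
  qed
  then show ?thesis unfolding cyclic_code_def using assms(1) by (intro conjI exI[of _ C]) simp_all
qed

section \<open>The product construction\<close>

text \<open>One step of the recursion, in the notation of the paper: \<open>N' = N\<^sub>i\<^sub>-\<^sub>1\<close>,
  \<open>M = N\<^sub>i\<close>, \<open>H = {1..s\<^sub>i}\<close>, \<open>outer_code\<close> is \<open>C\<^sub>i\<close> and \<open>product D\<close> is \<open>C\<^sub>i \<odot> D\<close>.\<close>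

locale code_product =
  fixes q N' M :: nat and H :: "'b set" and \<Phi> :: "'b \<Rightarrow> 'a::{field,finite} \<Rightarrow> 'a"
  assumes Fq_subfield: "is_subfield (subfield q 1 :: 'a set)"
    and card_Fq: "card (subfield q 1 :: 'a set) = q"
    and source_subspace: "fq_subspace (subfield q 1) (subfield q N' :: 'a set)"
    and N'_pos: "1 \<le> N'"
    and Phi_inj: "h \<in> H \<Longrightarrow> inj_on (\<Phi> h) (subfield q N')"
    and Phi_linear: "h \<in> H \<Longrightarrow> fq_linear_on q (subfield q N') (\<Phi> h)"
    and Phi_into: "h \<in> H \<Longrightarrow> \<Phi> h ` subfield q N' \<subseteq> subfield q M"
    and orbits_distinct: "h \<in> H \<Longrightarrow> h' \<in> H \<Longrightarrow> h \<noteq> h' \<Longrightarrow>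
       orb q M (\<Phi> h ` subfield q N') \<noteq> orb q M (\<Phi> h' ` subfield q N')"
    and orbits_full_length: "h \<in> H \<Longrightarrow> full_length q M (\<Phi> h ` subfield q N')"
    and min_dist_outer: "min_dist q (\<Union>h\<in>H. orb q M (\<Phi> h ` subfield q N')) = enat (2 * N' - 2)"
begin

abbreviation V :: "'b \<Rightarrow> 'a set" where
  "V h \<equiv> \<Phi> h ` subfield q N'"

definition outer_code :: "'a set set" where
  "outer_code = (\<Union>h\<in>H. orb q M (V h))"

definition product :: "'a set set \<Rightarrow> 'a set set" where
  "product D = {(\<lambda>x. \<beta> * x) ` (\<Phi> h ` U) | \<beta> h U.
     \<beta> \<in> subfield q M \<and> \<beta> \<noteq> 0 \<and> h \<in> H \<and> U \<in> D}"

lemma q_ge_2: "2 \<le> q"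
  using card_is_subfield_ge_2[OF Fq_subfield] card_Fq by simp

lemma image_scaled_Phi: "(\<lambda>x. \<beta> * x) ` \<Phi> h ` U = (\<lambda>x. \<beta> * \<Phi> h x) ` U"
  by (simp add: image_image)

lemma scaled_Phi_linear: "h \<in> H \<Longrightarrow> fq_linear_on q (subfield q N') (\<lambda>x. \<beta> * \<Phi> h x)"
  by (rule fq_linear_on_scale[OF Phi_linear])

lemma scaled_Phi_inj: "h \<in> H \<Longrightarrow> \<beta> \<noteq> 0 \<Longrightarrow> inj_on (\<lambda>x. \<beta> * \<Phi> h x) (subfield q N')"
  using Phi_inj by (simp add: inj_on_def)

lemma fq_subspace_scaled_Phi:
  assumes "h \<in> H" "U \<subseteq> subfield q N'" "fq_subspace (subfield q 1) U"
  shows "fq_subspace (subfield q 1) ((\<lambda>x. \<beta> * x) ` \<Phi> h ` U)"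
  unfolding image_scaled_Phi
  by (rule fq_subspace_image[OF scaled_Phi_linear[OF assms(1)] assms(2,3)])

lemma fq_dim_scaled_Phi:
  assumes "h \<in> H" "\<beta> \<noteq> 0" "U \<subseteq> subfield q N'" "fq_subspace (subfield q 1) U"
  shows "fq_dim (subfield q 1) ((\<lambda>x. \<beta> * x) ` \<Phi> h ` U) = fq_dim (subfield q 1) U"
  unfolding image_scaled_Phi
  by (rule fq_dim_image[OF Fq_subfield scaled_Phi_linear[OF assms(1)] scaled_Phi_inj[OF assms(1,2)]
        assms(3,4)])

lemma sdist_scaled_Phi:
  assumes "h \<in> H" "\<beta> \<noteq> 0"
    and U: "U \<subseteq> subfield q N'" "fq_subspace (subfield q 1) U"
    and U': "U' \<subseteq> subfield q N'" "fq_subspace (subfield q 1) U'"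
  shows "sdist q ((\<lambda>x. \<beta> * x) ` \<Phi> h ` U) ((\<lambda>x. \<beta> * x) ` \<Phi> h ` U') = sdist q U U'"
  unfolding image_scaled_Phi
  by (rule sdist_image[OF Fq_subfield scaled_Phi_linear[OF assms(1)] scaled_Phi_inj[OF assms(1,2)]
        source_subspace U(1) U'(1) U(2) U'(2)])

lemma fq_dim_source_le: "fq_dim (subfield q 1) (subfield q N' :: 'a set) \<le> N'"
proof -
  have "q ^ fq_dim (subfield q 1) (subfield q N' :: 'a set) = card (subfield q N' :: 'a set)"
    using card_fq_subspace[OF Fq_subfield source_subspace] card_Fq by simp
  also have "\<dots> \<le> q ^ N'" using card_subfield_le[OF q_ge_2 N'_pos] .
  finally show ?thesis using q_ge_2 by (simp add: power_le_imp_le_exp)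
qed

lemma outer_codeI: "\<beta> \<in> subfield q M \<Longrightarrow> \<beta> \<noteq> 0 \<Longrightarrow> h \<in> H \<Longrightarrow> (\<lambda>x. \<beta> * x) ` V h \<in> outer_code"
  unfolding outer_code_def orb_def by blast

lemma outer_codeE:
  assumes "W \<in> outer_code"
  obtains \<beta> h where "\<beta> \<in> subfield q M" "\<beta> \<noteq> 0" "h \<in> H" "W = (\<lambda>x. \<beta> * x) ` V h"
  using assms unfolding outer_code_def orb_def by blast

lemma outer_code_subspace:
  assumes "W \<in> outer_code"
  shows "fq_subspace (subfield q 1) W"
    and "fq_dim (subfield q 1) W = fq_dim (subfield q 1) (subfield q N' :: 'a set)"
proof -
  obtain \<beta> h where "\<beta> \<in> subfield q M" "\<beta> \<noteq> 0" "h \<in> H" "W = (\<lambda>x. \<beta> * x) ` V h"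
    using assms by (rule outer_codeE)
  then show "fq_subspace (subfield q 1) W"
    and "fq_dim (subfield q 1) W = fq_dim (subfield q 1) (subfield q N' :: 'a set)"
    using fq_subspace_scaled_Phi[OF _ subset_refl source_subspace]
      fq_dim_scaled_Phi[OF _ _ subset_refl source_subspace] by simp_all
qed

text \<open>Here the minimum distance \<open>2 N' - 2\<close> of the outer code enters: its codewords have
  dimension at most \<open>N'\<close>, so distinct ones meet in at most a line.\<close>

lemma outer_code_Int_dim_le_1:
  assumes W: "W \<in> outer_code" "W' \<in> outer_code" "W \<noteq> W'"
  shows "fq_dim (subfield q 1) (W \<inter> W') \<le> 1"
proof -
  let ?F = "subfield q 1 :: 'a set"
  let ?d = "fq_dim ?F (subfield q N' :: 'a set)"
  have "2 * N' - 2 \<le> sdist q W W'"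
    using min_dist_outer W unfolding outer_code_def min_dist_eq_enat_iff by blast
  also have "\<dots> = 2 * ?d - 2 * fq_dim ?F (W \<inter> W')"
    using outer_code_subspace[OF W(1)] outer_code_subspace[OF W(2)]
    by (intro sdist_eq[OF Fq_subfield])
  finally have "2 * N' - 2 \<le> 2 * ?d - 2 * fq_dim ?F (W \<inter> W')" .
  moreover have "fq_dim ?F (W \<inter> W') \<le> fq_dim ?F W"
    using outer_code_subspace(1)[OF W(1)] outer_code_subspace(1)[OF W(2)]
    by (intro fq_dim_mono[OF Fq_subfield fq_subspace_Int]) auto
  ultimately show ?thesis using outer_code_subspace(2)[OF W(1)] fq_dim_source_le N'_pos by linarith
qed

text \<open>Distinct orbits determine \<open>h\<close>, and full length determines \<open>\<beta>\<close> up to a factor in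
  \<open>F\<^sub>q\<^sup>*\<close>.\<close>

lemma scaled_V_eqD:
  assumes \<beta>: "\<beta> \<in> subfield q M" "\<beta> \<noteq> 0" "h \<in> H"
    and \<beta>': "\<beta>' \<in> subfield q M" "\<beta>' \<noteq> 0" "h' \<in> H"
    and eq: "(\<lambda>x. \<beta> * x) ` V h = (\<lambda>x. \<beta>' * x) ` V h'"
  shows "h = h'" and "inverse \<beta>' * \<beta> \<in> subfield q 1"
proof -
  show "h = h'"
    using orbits_distinct[OF \<beta>(3) \<beta>'(3)] orb_eq_if_scaled_eq[OF \<beta>(1,2) \<beta>'(1,2) eq] by blast
  have "(\<lambda>x. (inverse \<beta>' * \<beta>) * x) ` V h = (\<lambda>x. inverse \<beta>' * x) ` (\<lambda>x. \<beta> * x) ` V h"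
    by (simp only: image_mult_image_mult)
  also have "\<dots> = (\<lambda>x. inverse \<beta>' * x) ` (\<lambda>x. \<beta>' * x) ` V h"
    using eq \<open>h = h'\<close> by simp
  also have "\<dots> = V h" using \<beta>'(2) by (simp only: image_mult_image_mult left_inverse) simp
  finally have "(\<lambda>x. (inverse \<beta>' * \<beta>) * x) ` V h = V h" .
  moreover have "inverse \<beta>' * \<beta> \<in> subfield q M"
    using \<beta>(1) \<beta>'(1) by (intro subfield_mult subfield_inverse)
  moreover have "inverse \<beta>' * \<beta> \<noteq> 0" using \<beta>(2) \<beta>'(2) by simp
  ultimately show "inverse \<beta>' * \<beta> \<in> subfield q 1"
    using orbits_full_length[OF \<beta>(3)] unfolding full_length_def by blast
qed

lemma scaled_Phi_image_eq:
  assumes \<beta>: "\<beta> \<in> subfield q M" "\<beta> \<noteq> 0" "h \<in> H"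
    and \<beta>': "\<beta>' \<in> subfield q M" "\<beta>' \<noteq> 0" "h' \<in> H"
    and eq: "(\<lambda>x. \<beta> * x) ` V h = (\<lambda>x. \<beta>' * x) ` V h'"
    and U: "U \<subseteq> subfield q N'" "fq_subspace (subfield q 1) U"
  shows "(\<lambda>x. \<beta> * x) ` \<Phi> h ` U = (\<lambda>x. \<beta>' * x) ` \<Phi> h' ` U"
proof -
  define \<gamma> where "\<gamma> = inverse \<beta>' * \<beta>"
  have "h = h'" and \<gamma>: "\<gamma> \<in> subfield q 1"
    using scaled_V_eqD[OF \<beta> \<beta>' eq] unfolding \<gamma>_def by simp_all
  have "\<gamma> \<noteq> 0" using \<beta>(2) \<beta>'(2) by (simp add: \<gamma>_def)
  have "(\<lambda>x. \<beta> * x) ` \<Phi> h ` U = (\<lambda>x. \<beta>' * x) ` (\<lambda>x. \<gamma> * x) ` \<Phi> h ` U"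
    using \<beta>'(2) by (simp add: image_mult_image_mult \<gamma>_def mult.assoc[symmetric])
  also have "(\<lambda>x. \<gamma> * x) ` \<Phi> h ` U = \<Phi> h ` U"
    by (rule scale_fq_subspace[OF \<gamma> \<open>\<gamma> \<noteq> 0\<close> fq_subspace_image[OF Phi_linear[OF \<beta>(3)] U]])
  finally show ?thesis using \<open>h = h'\<close> by simp
qed

lemma product_memE:
  assumes "X \<in> product D"
  obtains \<beta> h U where "\<beta> \<in> subfield q M" "\<beta> \<noteq> 0" "h \<in> H" "U \<in> D"
    "X = (\<lambda>x. \<beta> * x) ` \<Phi> h ` U"
  using assms unfolding product_def by blast

lemma product_memI:
  "\<beta> \<in> subfield q M \<Longrightarrow> \<beta> \<noteq> 0 \<Longrightarrow> h \<in> H \<Longrightarrow> U \<in> D \<Longrightarrow> (\<lambda>x. \<beta> * x) ` \<Phi> h ` U \<in> product D"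
  unfolding product_def by blast

lemma product_scale_closed:
  assumes "\<gamma> \<in> subfield q M" "\<gamma> \<noteq> 0" "X \<in> product D"
  shows "(\<lambda>x. \<gamma> * x) ` X \<in> product D"
proof -
  obtain \<beta> h U where b: "\<beta> \<in> subfield q M" "\<beta> \<noteq> 0" "h \<in> H" "U \<in> D"
    and X: "X = (\<lambda>x. \<beta> * x) ` \<Phi> h ` U"
    using assms(3) by (rule product_memE)
  have "(\<lambda>x. \<gamma> * x) ` X = (\<lambda>x. (\<gamma> * \<beta>) * x) ` \<Phi> h ` U"
    unfolding X image_mult_image_mult ..
  moreover have "\<gamma> * \<beta> \<in> subfield q M" using assms(1) b(1) by (rule subfield_mult)
  moreover have "\<gamma> * \<beta> \<noteq> 0" using assms(2) b(2) by simp
  ultimately show ?thesis using b(3,4) product_memI by metis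
qed

lemma product_in_Grass:
  assumes D: "D \<subseteq> Grass q N' k"
  shows "product D \<subseteq> Grass q M k"
proof
  fix X assume "X \<in> product D"
  then obtain \<beta> h U where b: "\<beta> \<in> subfield q M" "\<beta> \<noteq> 0" "h \<in> H" "U \<in> D"
    and X: "X = (\<lambda>x. \<beta> * x) ` \<Phi> h ` U"
    by (rule product_memE)
  have U: "U \<subseteq> subfield q N'" "fq_subspace (subfield q 1) U" "fq_dim (subfield q 1) U = k"
    using D b(4) unfolding Grass_def by auto
  have "X \<subseteq> subfield q M"
  proof
    fix y assume "y \<in> X"
    then obtain u where "u \<in> U" "y = \<beta> * \<Phi> h u" unfolding X by blast
    then show "y \<in> subfield q M" using Phi_into[OF b(3)] U(1) b(1) by (blast intro: subfield_mult)
  qed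
  moreover have "fq_subspace (subfield q 1) X"
    unfolding X by (rule fq_subspace_scaled_Phi[OF b(3) U(1,2)])
  moreover have "fq_dim (subfield q 1) X = k"
    unfolding X using fq_dim_scaled_Phi[OF b(3,2) U(1,2)] U(3) by simp
  ultimately show "X \<in> Grass q M k" unfolding Grass_def by blast
qed

lemma product_subset_outer:
  assumes "X \<in> product D" "D \<subseteq> Grass q N' k"
  shows "\<exists>W\<in>outer_code. X \<subseteq> W"
proof -
  obtain \<beta> h U where b: "\<beta> \<in> subfield q M" "\<beta> \<noteq> 0" "h \<in> H" "U \<in> D"
    and X: "X = (\<lambda>x. \<beta> * x) ` \<Phi> h ` U"
    using assms(1) by (rule product_memE)
  have "U \<subseteq> subfield q N'" using assms(2) b(4) unfolding Grass_def by auto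
  then have "X \<subseteq> (\<lambda>x. \<beta> * x) ` V h" unfolding X by blast
  moreover have "(\<lambda>x. \<beta> * x) ` V h \<in> outer_code" using b(1-3) by (rule outer_codeI)
  ultimately show ?thesis by blast
qed

lemma product_outer_unique:
  assumes D: "D \<subseteq> Grass q N' k" and "1 < k" and X: "X \<in> product D"
    and W: "W \<in> outer_code" "W' \<in> outer_code" "X \<subseteq> W" "X \<subseteq> W'"
  shows "W = W'"
proof (rule ccontr)
  assume "W \<noteq> W'"
  have "X \<in> Grass q M k" using product_in_Grass[OF D] X by blast
  then have "fq_subspace (subfield q 1) X" and "k = fq_dim (subfield q 1) X"
    unfolding Grass_def by auto
  note \<open>k = fq_dim (subfield q 1) X\<close>
  also have "fq_dim (subfield q 1) X \<le> fq_dim (subfield q 1) (W \<inter> W')"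
    using \<open>fq_subspace (subfield q 1) X\<close> W(3,4)
    by (intro fq_dim_mono[OF Fq_subfield _ fq_subspace_Int[OF outer_code_subspace(1)[OF W(1)]
          outer_code_subspace(1)[OF W(2)]]]) auto
  also have "\<dots> \<le> 1" using outer_code_Int_dim_le_1[OF W(1,2) \<open>W \<noteq> W'\<close>] .
  finally show False using \<open>1 < k\<close> by simp
qed

lemma product_within_outer:
  assumes D: "D \<subseteq> Grass q N' k" "1 < k" and \<beta>: "\<beta> \<in> subfield q M" "\<beta> \<noteq> 0" "h \<in> H"
  shows "{X \<in> product D. X \<subseteq> (\<lambda>x. \<beta> * x) ` V h} = (\<lambda>U. (\<lambda>x. \<beta> * x) ` \<Phi> h ` U) ` D"
proof (intro equalityI subsetI)
  fix X assume "X \<in> {X \<in> product D. X \<subseteq> (\<lambda>x. \<beta> * x) ` V h}"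
  then have X: "X \<in> product D" "X \<subseteq> (\<lambda>x. \<beta> * x) ` V h" by auto
  obtain \<beta>' h' U where b': "\<beta>' \<in> subfield q M" "\<beta>' \<noteq> 0" "h' \<in> H" "U \<in> D"
    and X_eq: "X = (\<lambda>x. \<beta>' * x) ` \<Phi> h' ` U"
    using X(1) by (rule product_memE)
  have U: "U \<subseteq> subfield q N'" "fq_subspace (subfield q 1) U"
    using D(1) b'(4) unfolding Grass_def by auto
  have "X \<subseteq> (\<lambda>x. \<beta>' * x) ` V h'" unfolding X_eq using U(1) by blast
  then have "(\<lambda>x. \<beta> * x) ` V h = (\<lambda>x. \<beta>' * x) ` V h'"
    using product_outer_unique[OF D X(1) outer_codeI[OF \<beta>] outer_codeI[OF b'(1-3)] X(2)] by blast
  then have "X = (\<lambda>x. \<beta> * x) ` \<Phi> h ` U"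
    unfolding X_eq by (rule scaled_Phi_image_eq[OF \<beta> b'(1-3) _ U, symmetric])
  then show "X \<in> (\<lambda>U. (\<lambda>x. \<beta> * x) ` \<Phi> h ` U) ` D" using b'(4) by blast
next
  fix X assume "X \<in> (\<lambda>U. (\<lambda>x. \<beta> * x) ` \<Phi> h ` U) ` D"
  then obtain U where U: "U \<in> D" "X = (\<lambda>x. \<beta> * x) ` \<Phi> h ` U" by blast
  have "U \<subseteq> subfield q N'" using D(1) U(1) unfolding Grass_def by auto
  then have "X \<subseteq> (\<lambda>x. \<beta> * x) ` V h" unfolding U(2) by blast
  moreover have "X \<in> product D" unfolding U(2) using \<beta> U(1) by (rule product_memI)
  ultimately show "X \<in> {X \<in> product D. X \<subseteq> (\<lambda>x. \<beta> * x) ` V h}" by blast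
qed

text \<open>Each codeword of the product lies in exactly one codeword of the outer code, which
  contains an injective image of \<open>D\<close>.\<close>

lemma card_product:
  assumes D: "D \<subseteq> Grass q N' k" and "1 < k"
  shows "card (product D) = card outer_code * card D"
proof -
  have cover: "(\<Union>W\<in>outer_code. {X \<in> product D. X \<subseteq> W}) = product D"
    using product_subset_outer[OF _ D] by blast
  have "card (\<Union>W\<in>outer_code. {X \<in> product D. X \<subseteq> W})
      = (\<Sum>W\<in>outer_code. card {X \<in> product D. X \<subseteq> W})"
    by (rule card_UN_disjoint) (auto dest: product_outer_unique[OF D \<open>1 < k\<close>])
  also have "\<dots> = (\<Sum>W\<in>outer_code. card D)"
  proof (rule sum.cong)
    fix W assume "W \<in> outer_code"
    then obtain \<beta> h where \<beta>: "\<beta> \<in> subfield q M" "\<beta> \<noteq> 0" "h \<in> H" and W: "W = (\<lambda>x. \<beta> * x) ` V h"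
      by (rule outer_codeE)
    have "inj_on (\<lambda>U. (\<lambda>x. \<beta> * x) ` \<Phi> h ` U) D"
    proof (rule inj_onI)
      fix U U' assume "U \<in> D" "U' \<in> D" "(\<lambda>x. \<beta> * x) ` \<Phi> h ` U = (\<lambda>x. \<beta> * x) ` \<Phi> h ` U'"
      moreover have "U \<subseteq> subfield q N'" "U' \<subseteq> subfield q N'"
        using D \<open>U \<in> D\<close> \<open>U' \<in> D\<close> unfolding Grass_def by auto
      ultimately show "U = U'"
        unfolding image_scaled_Phi using inj_on_image_eq_iff[OF scaled_Phi_inj[OF \<beta>(3,2)]] by blast
    qed
    then show "card {X \<in> product D. X \<subseteq> W} = card D"
      unfolding W product_within_outer[OF D \<open>1 < k\<close> \<beta>] by (rule card_image)
  qed simp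
  finally show ?thesis unfolding cover by simp
qed

lemma H_nonempty: "H \<noteq> {}"
proof -
  obtain W where "W \<in> (\<Union>h\<in>H. orb q M (V h))"
    using min_dist_outer unfolding min_dist_eq_enat_iff by blast
  then show ?thesis by blast
qed

lemma product_sdist_ge:
  assumes D: "D \<subseteq> Grass q N' k"
    and dist: "\<And>U U'. U \<in> D \<Longrightarrow> U' \<in> D \<Longrightarrow> U \<noteq> U' \<Longrightarrow> 2 * k - 2 \<le> sdist q U U'"
    and XY: "X \<in> product D" "Y \<in> product D" "X \<noteq> Y"
  shows "2 * k - 2 \<le> sdist q X Y"
proof -
  have Ds: "U \<subseteq> subfield q N'" "fq_subspace (subfield q 1) U" if "U \<in> D" for U
    using D that unfolding Grass_def by auto
  obtain \<beta> h U where b: "\<beta> \<in> subfield q M" "\<beta> \<noteq> 0" "h \<in> H" "U \<in> D"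
    and X: "X = (\<lambda>x. \<beta> * x) ` \<Phi> h ` U"
    using XY(1) by (rule product_memE)
  obtain \<beta>' h' U' where b': "\<beta>' \<in> subfield q M" "\<beta>' \<noteq> 0" "h' \<in> H" "U' \<in> D"
    and Y: "Y = (\<lambda>x. \<beta>' * x) ` \<Phi> h' ` U'"
    using XY(2) by (rule product_memE)
  show ?thesis
  proof (cases "(\<lambda>x. \<beta> * x) ` V h = (\<lambda>x. \<beta>' * x) ` V h'")
    case True
    then have X': "X = (\<lambda>x. \<beta>' * x) ` \<Phi> h' ` U"
      unfolding X by (rule scaled_Phi_image_eq[OF b(1-3) b'(1-3) _ Ds[OF b(4)]])
    then have "U \<noteq> U'" using \<open>X \<noteq> Y\<close> Y by blast
    then have "2 * k - 2 \<le> sdist q U U'" using dist b(4) b'(4) by blast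
    also have "sdist q U U' = sdist q X Y"
      unfolding X' Y by (rule sdist_scaled_Phi[OF b'(3,2) Ds[OF b(4)] Ds[OF b'(4)], symmetric])
    finally show ?thesis .
  next
    case False
    let ?F = "subfield q 1 :: 'a set"
    have "X \<in> Grass q M k" "Y \<in> Grass q M k" using product_in_Grass[OF D] XY(1,2) by blast+
    then have XY_dim: "fq_subspace ?F X" "fq_dim ?F X = k" "fq_subspace ?F Y" "fq_dim ?F Y = k"
      unfolding Grass_def by auto
    have "X \<inter> Y \<subseteq> (\<lambda>x. \<beta> * x) ` V h \<inter> (\<lambda>x. \<beta>' * x) ` V h'"
      using Ds(1)[OF b(4)] Ds(1)[OF b'(4)] unfolding X Y by blast
    moreover have W: "(\<lambda>x. \<beta> * x) ` V h \<in> outer_code" "(\<lambda>x. \<beta>' * x) ` V h' \<in> outer_code"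
      using b(1-3) b'(1-3) by (blast intro: outer_codeI)+
    ultimately have "fq_dim ?F (X \<inter> Y) \<le> fq_dim ?F ((\<lambda>x. \<beta> * x) ` V h \<inter> (\<lambda>x. \<beta>' * x) ` V h')"
      by (intro fq_dim_mono[OF Fq_subfield fq_subspace_Int[OF XY_dim(1,3)]]
          fq_subspace_Int[OF outer_code_subspace(1) outer_code_subspace(1)])
    also have "\<dots> \<le> 1"
      using outer_code_Int_dim_le_1[OF W False] .
    finally show ?thesis using sdist_eq[OF Fq_subfield XY_dim(1,3,2,4)] by linarith
  qed
qed

lemma min_dist_product:
  assumes D: "D \<subseteq> Grass q N' k" and md: "min_dist q D = enat (2 * k - 2)"
  shows "min_dist q (product D) = enat (2 * k - 2)"
  unfolding min_dist_eq_enat_iff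
proof (intro conjI ballI impI)
  have Ds: "U \<subseteq> subfield q N'" "fq_subspace (subfield q 1) U" if "U \<in> D" for U
    using D that unfolding Grass_def by auto
  have dist: "2 * k - 2 \<le> sdist q U U'" if "U \<in> D" "U' \<in> D" "U \<noteq> U'" for U U'
    using md that unfolding min_dist_eq_enat_iff by blast
  show "2 * k - 2 \<le> sdist q X Y" if "X \<in> product D" "Y \<in> product D" "X \<noteq> Y" for X Y
    by (rule product_sdist_ge[OF D dist that])
  obtain U U' where U: "U \<in> D" "U' \<in> D" "U \<noteq> U'" "sdist q U U' = 2 * k - 2"
    using md unfolding min_dist_eq_enat_iff by blast
  obtain h where h: "h \<in> H" using H_nonempty by blast
  have in_product: "\<Phi> h ` Z \<in> product D" if "Z \<in> D" for Z
    using product_memI[OF subfield_1 one_neq_zero h that] by simp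
  have "\<Phi> h ` U \<noteq> \<Phi> h ` U'"
    using U(3) inj_on_image_eq_iff[OF Phi_inj[OF h] Ds(1)[OF U(1)] Ds(1)[OF U(2)]] by simp
  moreover have "sdist q (\<Phi> h ` U) (\<Phi> h ` U') = 2 * k - 2"
    using sdist_scaled_Phi[OF h one_neq_zero Ds[OF U(1)] Ds[OF U(2)]] U(4) by simp
  ultimately have "\<Phi> h ` U \<noteq> \<Phi> h ` U' \<and> sdist q (\<Phi> h ` U) (\<Phi> h ` U') = 2 * k - 2" ..
  then show "\<exists>X\<in>product D. \<exists>Y\<in>product D. X \<noteq> Y \<and> sdist q X Y = 2 * k - 2"
    using in_product[OF U(1)] in_product[OF U(2)] by (intro bexI)
qed

end

lemma code_product_subfieldsI:
  fixes \<Phi> :: "'b \<Rightarrow> 'a::{field,finite} \<Rightarrow> 'a"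
  assumes q: "q = CHAR('a) ^ a" and card: "card (UNIV :: 'a set) = q ^ n" and "1 \<le> N'"
    and "\<forall>h\<in>H. inj_on (\<Phi> h) (subfield q N') \<and> fq_linear_on q (subfield q N') (\<Phi> h)
       \<and> \<Phi> h ` subfield q N' \<subseteq> subfield q M"
    and "\<forall>h\<in>H. \<forall>h'\<in>H. h \<noteq> h' \<longrightarrow>
       orb q M (\<Phi> h ` subfield q N') \<noteq> orb q M (\<Phi> h' ` subfield q N')"
    and "\<forall>h\<in>H. full_length q M (\<Phi> h ` subfield q N')"
    and "min_dist q (\<Union>h\<in>H. orb q M (\<Phi> h ` subfield q N')) = enat (2 * N' - 2)"
  shows "code_product q N' M H \<Phi>"
proof unfold_locales
  show "is_subfield (subfield q 1 :: 'a set)" by (rule is_subfield_subfield[OF q])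
  show "card (subfield q 1 :: 'a set) = q" by (rule card_subfield_1[OF q card])
  show "fq_subspace (subfield q 1) (subfield q N' :: 'a set)" by (rule fq_subspace_subfield[OF q])
qed (use assms(3-) in blast)+

lemma code_product_iterate:
  fixes e i :: nat
  assumes products: "\<And>i. i \<in> {2..e} \<Longrightarrow> code_product q (N (i - 1)) (N i) (H i) (\<Phi> i)"
    and D_step: "\<And>i. i \<in> {2..e} \<Longrightarrow> D i = {(\<lambda>x. \<beta> * x) ` (\<Phi> i h ` U) | \<beta> h U.
       \<beta> \<in> subfield q (N i) \<and> \<beta> \<noteq> 0 \<and> h \<in> H i \<and> U \<in> D (i - 1)}"
    and Cc_step: "\<And>i. i \<in> {2..e} \<Longrightarrow> Cc i = (\<Union>h\<in>H i. orb q (N i) (\<Phi> i h ` subfield q (N (i - 1))))"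
    and D1: "D 1 = Cc 1" "D 1 \<subseteq> Grass q (N 1) k" "min_dist q (D 1) = enat (2 * k - 2)"
    and "1 < k" and i: "1 \<le> i" "i \<le> e"
  shows "D i \<subseteq> Grass q (N i) k \<and> min_dist q (D i) = enat (2 * k - 2)
    \<and> card (D i) = (\<Prod>j\<in>{1..i}. card (Cc j))"
  using i
proof (induction i rule: nat_induct_at_least)
  case (Suc i)
  then have i: "Suc i \<in> {2..e}" by simp
  interpret P: code_product q "N i" "N (Suc i)" "H (Suc i)" "\<Phi> (Suc i)"
    using products[OF i] by simp
  have D_Suc: "D (Suc i) = P.product (D i)" and Cc_Suc: "Cc (Suc i) = P.outer_code"
    using D_step[OF i] Cc_step[OF i] unfolding P.product_def P.outer_code_def by simp_all
  have IH: "D i \<subseteq> Grass q (N i) k" "min_dist q (D i) = enat (2 * k - 2)"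
    "card (D i) = (\<Prod>j\<in>{1..i}. card (Cc j))"
    using Suc by simp_all
  show ?case
    unfolding D_Suc prod.cl_ivl_Suc Cc_Suc P.card_product[OF IH(1) \<open>1 < k\<close>]
    using P.product_in_Grass[OF IH(1)] P.min_dist_product[OF IH(1,2)] IH(3) \<open>1 \<le> i\<close>
    by (simp add: mult.commute)
qed (use D1 in simp)

theorem theorem2p19:
  fixes q m k e n :: nat and r N s :: "nat \<Rightarrow> nat"
    and C1 :: "('a::{field,finite}) set set"
    and \<Phi> :: "nat \<Rightarrow> nat \<Rightarrow> 'a \<Rightarrow> 'a"
    and Cc D :: "nat \<Rightarrow> 'a set set"
  assumes q_pp: "\<exists>p a. prime p \<and> a > 0 \<and> q = p ^ a"
    and card_field: "card (UNIV :: 'a set) = q ^ n"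
    and e2: "e \<ge> 2"
    and r_gt: "\<forall>i\<in>{1..e-1}. r i > 1"
    and m_gt: "m > 1"
    and n_def: "n = (\<Prod>i\<in>{1..e-1}. r i) * m"
    and k_bds: "1 < k" "k \<le> m"
    and N1: "N 1 = m"
    and Ni: "\<forall>i\<in>{2..e}. N i = (\<Prod>j\<in>{1..i-1}. r j) * m"
    and C1_code: "cyclic_code q m k C1"
    and Phi_lin: "\<forall>i\<in>{2..e}. \<forall>h\<in>{1..s i}.
         inj_on (\<Phi> i h) (subfield q (N (i-1)))
       \<and> fq_linear_on q (subfield q (N (i-1))) (\<Phi> i h)
       \<and> \<Phi> i h ` subfield q (N (i-1)) \<subseteq> subfield q (N i)"
    and Phi_distinct: "\<forall>i\<in>{2..e}. \<forall>h\<in>{1..s i}. \<forall>h'\<in>{1..s i}. h \<noteq> h' \<longrightarrow>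
         orb q (N i) (\<Phi> i h ` subfield q (N (i-1))) \<noteq> orb q (N i) (\<Phi> i h' ` subfield q (N (i-1)))"
    and Phi_full: "\<forall>i\<in>{2..e}. \<forall>h\<in>{1..s i}. full_length q (N i) (\<Phi> i h ` subfield q (N (i-1)))"
    and Cc1: "Cc 1 = C1"
    and Cci: "\<forall>i\<in>{2..e}. Cc i = (\<Union>h\<in>{1..s i}. orb q (N i) (\<Phi> i h ` subfield q (N (i-1))))"
    and D1: "D 1 = C1"
    and Di: "\<forall>i\<in>{2..e}. D i = {(\<lambda>x. \<beta> * x) ` (\<Phi> i h ` U) | \<beta> h U.
                 \<beta> \<in> subfield q (N i) \<and> \<beta> \<noteq> 0 \<and> h \<in> {1..s i} \<and> U \<in> D (i-1)}"
    and d1: "min_dist q C1 = enat (2*k - 2)"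
    and di: "\<forall>i\<in>{2..e}. min_dist q (Cc i) = enat (2 * N (i-1) - 2)"
  shows "cyclic_code q n k (D e) \<and> min_dist q (D e) = enat (2*k - 2)
         \<and> card (D e) = (\<Prod>i\<in>{1..e}. card (Cc i))"
proof -
  obtain a where q_CHAR: "q = CHAR('a) ^ a"
    using q_pp card_field by (rule CHAR_power_if_prime_power_card)
  have N_pos: "1 \<le> N i" if "i \<in> {1..e}" for i
  proof (cases "i = 1")
    case False
    have "1 \<le> r j" if "j \<in> {1..i - 1}" for j
    proof -
      have "j \<in> {1..e - 1}" using \<open>i \<in> {1..e}\<close> that by auto
      then show ?thesis using r_gt by fastforce
    qed
    then have "1 \<le> (\<Prod>j\<in>{1..i - 1}. r j)" by (rule prod_ge_1)
    then have "1 \<le> (\<Prod>j\<in>{1..i - 1}. r j) * m" using m_gt by (simp add: Suc_le_eq)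
    then show ?thesis using Ni False that by simp
  qed (use N1 m_gt in simp)
  have product: "code_product q (N (i - 1)) (N i) {1..s i} (\<Phi> i)" if i: "i \<in> {2..e}" for i
  proof (rule code_product_subfieldsI[OF q_CHAR card_field _ bspec[OF Phi_lin i]
        bspec[OF Phi_distinct i] bspec[OF Phi_full i]])
    show "1 \<le> N (i - 1)" using N_pos[of "i - 1"] i by fastforce
  qed (use di Cci i in simp)
  have D_e: "D e \<subseteq> Grass q (N e) k \<and> min_dist q (D e) = enat (2 * k - 2)
      \<and> card (D e) = (\<Prod>j\<in>{1..e}. card (Cc j))"
    by (rule code_product_iterate[where H = "\<lambda>i. {1..s i}" and N = N and \<Phi> = \<Phi>,
          OF product Di[rule_format] Cci[rule_format]])
      (use C1_code D1 Cc1 N1 d1 k_bds e2 in \<open>auto simp: cyclic_code_def\<close>)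
  interpret P: code_product q "N (e - 1)" "N e" "{1..s e}" "\<Phi> e"
    using product[of e] e2 by simp
  have D_e_product: "D e = P.product (D (e - 1))" using Di e2 unfolding P.product_def by simp
  have "cyclic_code q (N e) k (P.product (D (e - 1)))"
    by (rule cyclic_codeI[OF _ P.product_scale_closed]) (use D_e D_e_product in simp)
  then show ?thesis using D_e D_e_product e2 Ni n_def by simp
qed

end
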